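(* Let $r\ge 2$ and $m$ be integers with $3\le m\le 6$. Then for every integer $n\ge m-1$, $$F_{n+2,r}\equiv F_{n,r}\pmod{2^m},$$ i.e. from the term of index $m-1$ onward the sequence $(F_{n,r}\bmod 2^m)_{n\ge0}$ is periodic with period $2$.
   Context: For positive integers $r\le m\le n$, $S_r(n,m)$ denotes the $r$-Stirling number of the second kind: the number of partitions of $\{1,\dots,n\}$ into $m$ non-empty blocks such that $1,\dots,r$ lie in pairwise distinct blocks. For a positive integer $r$ and integer $n\ge 0$, the $r$-Fubini number is $F_{n,r}=\sum_{k=0}^{n}(k+r)!\,S_r(n+r,k+r)$. *)

theory Defs
  imports Main "HOL-Library.Disjoint_Sets"
begin

definition r_stirling :: "nat \<Rightarrow> nat \<Rightarrow> nat \<Rightarrow> nat" where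
  "r_stirling r n m = card {P. partition_on {1..n} P \<and> card P = m \<and>
      (\<forall>B\<in>P. \<forall>i\<in>{1..r}. \<forall>j\<in>{1..r}. i \<in> B \<and> j \<in> B \<longrightarrow> i = j)}"

definition r_fubini :: "nat \<Rightarrow> nat \<Rightarrow> nat" where
  "r_fubini n r = (\<Sum>k=0..n. fact (k + r) * r_stirling r (n + r) (k + r))"

end

theory Submission imports Defs begin

text \<open>Put a(n,j) = j! S_r(n+r,j), so that F_{n,r} is the sum of the a(n,j). Classifying the
  partitions of {1..n+r+1} by whether n+r+1 is a singleton block gives
  S_r(n+1,k) = S_r(n,k-1) + k S_r(n,k), hence a(n+1,j) = j (a(n,j) + a(n,j-1)).
  As 2^6 divides 8!, the terms with j \<ge> 8 vanish modulo 2^6, so F_{n,r} mod 2^6 is the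
  coordinate sum of a vector in (Z/64)^8 evolving under a fixed linear map from the start r! e_r,
  which is the zero vector once r \<ge> 8. The orbits of the seven possible starting vectors are
  computed explicitly: each is periodic with period 8 from step 5 on, and the congruences can be
  read off one period.\<close>

definition separates :: "'a set \<Rightarrow> 'a set set \<Rightarrow> bool" where
  "separates R P \<longleftrightarrow> (\<forall>B\<in>P. \<forall>i\<in>R. \<forall>j\<in>R. i \<in> B \<and> j \<in> B \<longrightarrow> i = j)"

definition separating_partitions :: "'a set \<Rightarrow> 'a set \<Rightarrow> nat \<Rightarrow> 'a set set set" where
  "separating_partitions R U k = {P. partition_on U P \<and> card P = k \<and> separates R P}"

lemma r_stirling_eq_card:
  "r_stirling r n m = card (separating_partitions {1..r} {1..n} m)"
  unfolding r_stirling_def separating_partitions_def separates_def by simp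

lemma finite_separating_partitions: "finite U \<Longrightarrow> finite (separating_partitions R U k)"
  unfolding separating_partitions_def by (rule finite_subset[OF _ finitely_many_partition_on]) auto

lemma partition_on_block:
  assumes "partition_on U P" and "B \<in> P"
  shows "B \<subseteq> U" and "B \<noteq> {}"
  using assms by (auto simp: partition_on_def)

lemma partition_on_disjnt_Diff:
  assumes "partition_on U P" and "C \<in> P"
  shows "disjnt C (\<Union>(P - {C}))"
proof -
  have "C \<inter> D = {}" if "D \<in> P - {C}" for D
    using disjointD[OF partition_onD2[OF assms(1)] assms(2), of D] that by auto
  then show ?thesis by (auto simp: disjnt_def)
qed

lemma bij_betw_insert_singleton_block:
  assumes U: "finite U" and x: "x \<notin> U"
  shows "bij_betw (insert {x}) (separating_partitions R U k)
    {P \<in> separating_partitions R (insert x U) (Suc k). {x} \<in> P}"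
proof (rule bij_betw_byWitness[where f'="\<lambda>P. P - {{x}}"])
  show "\<forall>P\<in>separating_partitions R U k. insert {x} P - {{x}} = P"
    using x by (auto simp: separating_partitions_def partition_on_def)
  show "insert {x} ` separating_partitions R U k
      \<subseteq> {P \<in> separating_partitions R (insert x U) (Suc k). {x} \<in> P}"
  proof safe
    fix P assume "P \<in> separating_partitions R U k"
    then have part: "partition_on U P" and "card P = k" and "separates R P"
      by (auto simp: separating_partitions_def)
    moreover have "finite P" using finite_elements[OF U part] .
    moreover have "{x} \<notin> P" using part x by (auto simp: partition_on_def)
    moreover have "partition_on (insert x U) (insert {x} P)"
      using part x by (subst partition_on_insert) (auto simp: partition_on_def disjnt_def)
    ultimately show "insert {x} P \<in> separating_partitions R (insert x U) (Suc k)"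
      by (auto simp: separating_partitions_def separates_def)
  qed
  show "(\<lambda>P. P - {{x}}) ` {P \<in> separating_partitions R (insert x U) (Suc k). {x} \<in> P}
      \<subseteq> separating_partitions R U k"
  proof safe
    fix P assume P: "P \<in> separating_partitions R (insert x U) (Suc k)" and xP: "{x} \<in> P"
    then have part: "partition_on (insert x U) P" and "card P = Suc k" and "separates R P"
      by (auto simp: separating_partitions_def)
    moreover have "finite P" using finite_elements[OF _ part] U by simp
    moreover have "partition_on U (P - {{x}})"
      using partition_on_insert[OF partition_on_disjnt_Diff[OF part xP], of "insert x U"]
        part xP x by (simp add: insert_absorb)
    ultimately show "P - {{x}} \<in> separating_partitions R U k"
      using xP by (auto simp: separating_partitions_def separates_def)
  qed
qed auto

lemma separating_partitions_insert_into_block: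
  assumes P: "P \<in> separating_partitions R U k" and C: "C \<in> P"
    and U: "finite U" and x: "x \<notin> U" "x \<notin> R"
  shows "insert (insert x C) (P - {C}) \<in> separating_partitions R (insert x U) k"
    and "{x} \<notin> insert (insert x C) (P - {C})"
proof -
  have p: "partition_on U P" and c: "card P = k" and q: "separates R P"
    using P by (auto simp: separating_partitions_def)
  have fin: "finite P" using finite_elements[OF U p] .
  have nx: "x \<notin> B" if "B \<in> P" for B using partition_on_block(1)[OF p that] x by blast
  have dC: "disjnt C (\<Union>(P - {C}))" by (rule partition_on_disjnt_Diff[OF p C])
  have p': "partition_on (U - C) (P - {C})" and CU: "C \<subseteq> U" and Cne: "C \<noteq> {}"
    using partition_on_insert[OF dC, of U] p C by (auto simp: insert_absorb)
  have dxC: "disjnt (insert x C) (\<Union>(P - {C}))" using dC nx by (auto simp: disjnt_def)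
  have "partition_on (insert x U) (insert (insert x C) (P - {C}))"
    using partition_on_insert[OF dxC, of "insert x U"] p' CU x
    by (simp add: insert_Diff_if) blast
  moreover have "card (insert (insert x C) (P - {C})) = k"
  proof -
    have "insert x C \<notin> P - {C}" using nx by auto
    then show ?thesis using fin c card_Suc_Diff1[OF fin C] by simp
  qed
  moreover have "separates R (insert (insert x C) (P - {C}))"
    using q C x(2) by (auto simp: separates_def)
  ultimately show "insert (insert x C) (P - {C}) \<in> separating_partitions R (insert x U) k"
    by (simp add: separating_partitions_def)
  show "{x} \<notin> insert (insert x C) (P - {C})" using nx[OF C] Cne nx by auto
qed

lemma separating_partitions_remove_from_block:
  assumes Q: "Q \<in> separating_partitions R (insert x U) k" and "{x} \<notin> Q"
    and B: "B \<in> Q" "x \<in> B" and U: "finite U" and x: "x \<notin> U"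
  shows "insert (B - {x}) (Q - {B}) \<in> separating_partitions R U k"
    and "B - {x} \<notin> Q - {B}"
proof -
  have p: "partition_on (insert x U) Q" and c: "card Q = k" and q: "separates R Q"
    using Q by (auto simp: separating_partitions_def)
  have fin: "finite Q" using finite_elements[OF _ p] U by simp
  have "B \<noteq> {x}" using \<open>{x} \<notin> Q\<close> B(1) by auto
  then have Cne: "B - {x} \<noteq> {}" using B(2) by blast
  have dB: "disjnt B (\<Union>(Q - {B}))" by (rule partition_on_disjnt_Diff[OF p B(1)])
  have p': "partition_on (insert x U - B) (Q - {B})" and BU: "B \<subseteq> insert x U"
    using partition_on_insert[OF dB, of "insert x U"] p B(1) by (auto simp: insert_absorb)
  show CQ: "B - {x} \<notin> Q - {B}"
  proof
    assume "B - {x} \<in> Q - {B}"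
    then have "(B - {x}) \<inter> B = {}" using disjointD[OF partition_onD2[OF p], of "B - {x}" B] B by auto
    then show False using Cne by auto
  qed
  have dC: "disjnt (B - {x}) (\<Union>(Q - {B}))" using dB by (auto simp: disjnt_def)
  have "U - (B - {x}) = insert x U - B" using x B(2) by auto
  then have "partition_on U (insert (B - {x}) (Q - {B}))"
    using partition_on_insert[OF dC, of U] p' BU Cne by auto
  moreover have "card (insert (B - {x}) (Q - {B})) = k"
    using CQ fin c card_Suc_Diff1[OF fin B(1)] by simp
  moreover have "separates R (insert (B - {x}) (Q - {B}))"
    using q B(1) unfolding separates_def by blast
  ultimately show "insert (B - {x}) (Q - {B}) \<in> separating_partitions R U k"
    by (simp add: separating_partitions_def)
qed

lemma bij_betw_insert_into_block:
  assumes U: "finite U" and x: "x \<notin> U" "x \<notin> R"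
  shows "bij_betw (\<lambda>(P, C). insert (insert x C) (P - {C}))
    (Sigma (separating_partitions R U k) (\<lambda>P. P))
    {P \<in> separating_partitions R (insert x U) k. {x} \<notin> P}"
  unfolding bij_betw_def
proof (intro conjI subset_antisym)
  let ?f = "\<lambda>(P, C). insert (insert x C) (P - {C})"
  show "inj_on ?f (Sigma (separating_partitions R U k) (\<lambda>P. P))"
  proof (rule inj_onI, clarsimp)
    fix P1 C1 P2 C2
    assume P: "P1 \<in> separating_partitions R U k" "P2 \<in> separating_partitions R U k"
      and C: "C1 \<in> P1" "C2 \<in> P2"
      and eq: "insert (insert x C1) (P1 - {C1}) = insert (insert x C2) (P2 - {C2})"
    have nx: "x \<notin> B" if "B \<in> P1 \<union> P2" for B
      using P that partition_on_block(1) x(1) by (fastforce simp: separating_partitions_def)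
    have "insert x C1 \<in> insert (insert x C2) (P2 - {C2})" using eq by blast
    then have "insert x C1 = insert x C2" using nx by blast
    then have c: "C1 = C2" using nx C by (metis UnI1 UnI2 insert_ident)
    have "P1 - {C1} = insert (insert x C1) (P1 - {C1}) - {insert x C1}" using nx by auto
    also have "\<dots> = P2 - {C1}" using eq c nx by auto
    finally show "P1 = P2 \<and> C1 = C2" using C c by blast
  qed
  show "?f ` Sigma (separating_partitions R U k) (\<lambda>P. P)
      \<subseteq> {P \<in> separating_partitions R (insert x U) k. {x} \<notin> P}"
  proof (rule image_subsetI)
    fix PC assume "PC \<in> Sigma (separating_partitions R U k) (\<lambda>P. P)"
    then obtain P C where "PC = (P, C)" "P \<in> separating_partitions R U k" "C \<in> P" by blast
    then show "?f PC \<in> {P \<in> separating_partitions R (insert x U) k. {x} \<notin> P}"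
      using separating_partitions_insert_into_block[OF _ _ U x, of P k C]
      by (simp only: mem_Collect_eq prod.case) blast
  qed
  show "{P \<in> separating_partitions R (insert x U) k. {x} \<notin> P}
      \<subseteq> ?f ` Sigma (separating_partitions R U k) (\<lambda>P. P)"
  proof clarify
    fix Q assume Q: "Q \<in> separating_partitions R (insert x U) k" and xQ: "{x} \<notin> Q"
    then obtain B where B: "B \<in> Q" "x \<in> B"
      using partition_onD1 by (fastforce simp: separating_partitions_def)
    note remove = separating_partitions_remove_from_block[OF Q xQ B U x(1)]
    have "?f (insert (B - {x}) (Q - {B}), B - {x}) = Q"
      using B remove(2) by (auto simp: insert_absorb)
    moreover have "(insert (B - {x}) (Q - {B}), B - {x})
        \<in> Sigma (separating_partitions R U k) (\<lambda>P. P)"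
      using remove(1) by simp
    ultimately show "Q \<in> ?f ` Sigma (separating_partitions R U k) (\<lambda>P. P)"
      by (rule image_eqI[OF sym])
  qed
qed

lemma card_separating_partitions_insert:
  assumes U: "finite U" and x: "x \<notin> U" "x \<notin> R"
  shows "card (separating_partitions R (insert x U) (Suc k))
    = card (separating_partitions R U k) + Suc k * card (separating_partitions R U (Suc k))"
proof -
  let ?A = "separating_partitions R (insert x U) (Suc k)"
  have "finite ?A" using finite_separating_partitions U by blast
  then have "card ?A = card {P \<in> ?A. {x} \<in> P} + card {P \<in> ?A. {x} \<notin> P}"
    by (subst card_Un_disjoint[symmetric]) (auto intro: arg_cong[where f=card])
  also have "card {P \<in> ?A. {x} \<in> P} = card (separating_partitions R U k)"
    using bij_betw_same_card[OF bij_betw_insert_singleton_block[OF U x(1)]] by simp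
  also have "card {P \<in> ?A. {x} \<notin> P} = card (Sigma (separating_partitions R U (Suc k)) (\<lambda>P. P))"
    using bij_betw_same_card[OF bij_betw_insert_into_block[OF U x]] by simp
  also have "\<dots> = (\<Sum>P\<in>separating_partitions R U (Suc k). card P)"
    using finite_separating_partitions[OF U] finite_elements[OF U]
    by (intro card_SigmaI) (auto simp: separating_partitions_def)
  also have "\<dots> = Suc k * card (separating_partitions R U (Suc k))"
    by (simp add: separating_partitions_def)
  finally show ?thesis .
qed

lemma separating_partition_of_self:
  assumes "partition_on R P" and "separates R P"
  shows "P = (\<lambda>i. {i}) ` R"
proof (intro subset_antisym subsetI)
  fix B assume B: "B \<in> P"
  then obtain i where "i \<in> B" using partition_on_block(2)[OF assms(1)] by blast
  moreover have "B = {i}" using \<open>i \<in> B\<close> partition_on_block(1)[OF assms(1) B] assms(2) B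
    unfolding separates_def by blast
  ultimately show "B \<in> (\<lambda>i. {i}) ` R" using partition_on_block(1)[OF assms(1) B] by blast
next
  fix B assume "B \<in> (\<lambda>i. {i}) ` R"
  then obtain i where i: "i \<in> R" "B = {i}" by blast
  then obtain C where C: "C \<in> P" "i \<in> C" using partition_onD1[OF assms(1)] by blast
  then have "C = {i}" using partition_on_block(1)[OF assms(1) C(1)] assms(2)
    unfolding separates_def by blast
  then show "B \<in> P" using C i by simp
qed

lemma card_separating_partitions_self:
  assumes "finite R"
  shows "card (separating_partitions R R k) = (if k = card R then 1 else 0)"
proof -
  have card_singletons: "card ((\<lambda>i. {i}) ` R) = card R"
    by (rule card_image) (auto simp: inj_on_def)
  have "separating_partitions R R k \<subseteq> {(\<lambda>i. {i}) ` R}"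
    using separating_partition_of_self by (auto simp: separating_partitions_def)
  moreover have "(\<lambda>i. {i}) ` R \<in> separating_partitions R R (card R)"
    using card_singletons
    by (auto simp: separating_partitions_def separates_def partition_on_singletons)
  ultimately have "separating_partitions R R k = (if k = card R then {(\<lambda>i. {i}) ` R} else {})"
    by (auto simp: separating_partitions_def)
  then show ?thesis by simp
qed

lemma separating_partitions_0:
  assumes "finite U" and "U \<noteq> {}"
  shows "separating_partitions R U 0 = {}"
  using assms by (auto simp: separating_partitions_def partition_on_def finite_elements card_eq_0_iff)

definition fubini_term :: "nat \<Rightarrow> nat \<Rightarrow> nat \<Rightarrow> nat" where
  "fubini_term r n j = fact j * r_stirling r (n + r) j"

lemma fubini_term_0: "fubini_term r 0 j = (if j = r then fact r else 0)"
  unfolding fubini_term_def r_stirling_eq_card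
  using card_separating_partitions_self[of "{1..r}" j] by simp

lemma fubini_term_at_0: "r \<ge> 1 \<Longrightarrow> fubini_term r n 0 = 0"
  unfolding fubini_term_def r_stirling_eq_card
  using separating_partitions_0[of "{1..n+r}" "{1..r}"] by simp

lemma fubini_term_Suc_Suc:
  "fubini_term r (Suc n) (Suc k) = Suc k * (fubini_term r n (Suc k) + fubini_term r n k)"
proof -
  have "{1..Suc n + r} = insert (Suc (n + r)) {1..n+r}" by auto
  then have "r_stirling r (Suc n + r) (Suc k) =
      r_stirling r (n + r) k + Suc k * r_stirling r (n + r) (Suc k)"
    unfolding r_stirling_eq_card by (simp add: card_separating_partitions_insert)
  then show ?thesis unfolding fubini_term_def by (simp add: algebra_simps)
qed

lemma fubini_term_Suc:
  "r \<ge> 1 \<Longrightarrow> fubini_term r (Suc n) j = j * (fubini_term r n j + fubini_term r n (j - 1))"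
  by (cases j) (simp_all add: fubini_term_at_0 fubini_term_Suc_Suc)

lemma fubini_term_eq_0_below: "r \<ge> 1 \<Longrightarrow> j < r \<Longrightarrow> fubini_term r n j = 0"
  by (induction n arbitrary: j) (auto simp: fubini_term_0 fubini_term_Suc)

lemma fubini_term_eq_0_above: "r \<ge> 1 \<Longrightarrow> n + r < j \<Longrightarrow> fubini_term r n j = 0"
  by (induction n arbitrary: j) (auto simp: fubini_term_0 fubini_term_Suc)

lemma r_fubini_eq_sum_fubini_term:
  assumes "r \<ge> 1" and "n + r < N"
  shows "r_fubini n r = (\<Sum>j<N. fubini_term r n j)"
proof -
  have "r_fubini n r = (\<Sum>j=r..n+r. fubini_term r n j)"
    unfolding r_fubini_def fubini_term_def
    using sum.shift_bounds_cl_nat_ivl[of "\<lambda>j. fact j * r_stirling r (n + r) j" 0 r n] by simp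
  also have "\<dots> = (\<Sum>j<N. fubini_term r n j)"
    using assms fubini_term_eq_0_below[OF assms(1)] fubini_term_eq_0_above[OF assms(1)]
    by (intro sum.mono_neutral_left) auto
  finally show ?thesis .
qed

lemma r_fubini_mod_eq_truncated_sum:
  assumes "r \<ge> 1" and "M dvd fact L"
  shows "r_fubini n r mod M = (\<Sum>j<L. fubini_term r n j) mod M"
proof -
  define N where "N = max L (n + r + 1)"
  have "r_fubini n r = (\<Sum>j<N. fubini_term r n j)"
    using r_fubini_eq_sum_fubini_term[OF assms(1)] by (simp add: N_def)
  also have "\<dots> = (\<Sum>j<L. fubini_term r n j) + (\<Sum>j\<in>{L..<N}. fubini_term r n j)"
    by (simp add: N_def lessThan_atLeast0 sum.atLeastLessThan_concat)
  finally have split: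
    "r_fubini n r = (\<Sum>j<L. fubini_term r n j) + (\<Sum>j\<in>{L..<N}. fubini_term r n j)" .
  have "M dvd fubini_term r n j" if "L \<le> j" for j
    using dvd_trans[OF assms(2) fact_dvd[OF that]] by (simp add: fubini_term_def)
  then have "M dvd (\<Sum>j\<in>{L..<N}. fubini_term r n j)"
    by (intro dvd_sum) auto
  then obtain c where "(\<Sum>j\<in>{L..<N}. fubini_term r n j) = M * c" by (rule dvdE)
  then show ?thesis unfolding split by simp
qed

definition fubini_step :: "nat \<Rightarrow> nat \<Rightarrow> nat list \<Rightarrow> nat list" where
  "fubini_step L M s = map (\<lambda>j. j * (s ! j + s ! (j - 1)) mod M) [0..<L]"

definition fubini_init :: "nat \<Rightarrow> nat \<Rightarrow> nat \<Rightarrow> nat list" where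
  "fubini_init L M r = map (\<lambda>j. if j = r then fact r mod M else 0) [0..<L]"

definition fubini_state :: "nat \<Rightarrow> nat \<Rightarrow> nat \<Rightarrow> nat \<Rightarrow> nat list" where
  "fubini_state L M r n = (fubini_step L M ^^ n) (fubini_init L M r)"

lemma length_fubini_state: "length (fubini_state L M r n) = L"
  by (cases n) (simp_all add: fubini_state_def fubini_step_def fubini_init_def)

lemma nth_fubini_state:
  assumes "r \<ge> 1" and "j < L"
  shows "fubini_state L M r n ! j = fubini_term r n j mod M"
  using assms(2)
proof (induction n arbitrary: j)
  case 0
  then show ?case by (simp add: fubini_state_def fubini_init_def fubini_term_0)
next
  case (Suc n)
  have "fubini_state L M r (Suc n) ! j
      = j * (fubini_state L M r n ! j + fubini_state L M r n ! (j - 1)) mod M"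
    using Suc.prems by (simp add: fubini_state_def fubini_step_def)
  also have "\<dots> = j * (fubini_term r n j mod M + fubini_term r n (j - 1) mod M) mod M"
    using Suc by simp
  also have "\<dots> = j * (fubini_term r n j + fubini_term r n (j - 1)) mod M"
    by (metis mod_add_eq mod_mult_right_eq)
  also have "\<dots> = fubini_term r (Suc n) j mod M"
    using fubini_term_Suc[OF assms(1)] by simp
  finally show ?case .
qed

lemma r_fubini_mod_eq_sum_fubini_state:
  assumes "r \<ge> 1" and "M dvd fact L"
  shows "r_fubini n r mod M = sum_list (fubini_state L M r n) mod M"
proof -
  have "(\<Sum>j<L. fubini_term r n j mod M) = sum_list (fubini_state L M r n)"
    by (simp add: sum_list_sum_nth length_fubini_state nth_fubini_state[OF assms(1)] atLeast0LessThan)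
  then show ?thesis
    using r_fubini_mod_eq_truncated_sum[OF assms] by (metis mod_sum_eq)
qed

lemma fubini_state_beyond_width: "L \<le> r \<Longrightarrow> fubini_state L M r n = fubini_state L M L n"
  unfolding fubini_state_def fubini_init_def by (auto intro!: arg_cong[of _ _ "fubini_step L M ^^ n"])

fun iterates :: "('a \<Rightarrow> 'a) \<Rightarrow> 'a \<Rightarrow> nat \<Rightarrow> 'a list" where
  "iterates f x 0 = [x]"
| "iterates f x (Suc n) = x # iterates f (f x) n"

lemma nth_iterates: "k \<le> n \<Longrightarrow> iterates f x n ! k = (f ^^ k) x"
proof (induction n arbitrary: x k)
  case (Suc n)
  then show ?case by (cases k) (simp_all add: funpow_swap1)
qed simp

lemma funpow_eventually_periodic:
  fixes f :: "'a \<Rightarrow> 'a"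
  assumes "(f ^^ (a + p)) x = (f ^^ a) x" and "a \<le> n"
  shows "(f ^^ n) x = (f ^^ (a + (n - a) mod p)) x"
proof -
  have shift: "(f ^^ (a + q * p + i)) x = (f ^^ (a + i)) x" for q i
  proof (induction q)
    case (Suc q)
    have "(f ^^ (a + Suc q * p + i)) x = (f ^^ (q * p + i) \<circ> f ^^ (a + p)) x"
      by (simp only: funpow_add[symmetric]) (simp add: algebra_simps)
    also have "\<dots> = (f ^^ (q * p + i) \<circ> f ^^ a) x"
      using assms(1) by simp
    also have "\<dots> = (f ^^ (a + q * p + i)) x"
      by (simp only: funpow_add[symmetric]) (simp add: algebra_simps)
    finally show ?case using Suc.IH by simp
  qed simp
  have "n = a + (n - a) div p * p + (n - a) mod p"
    using assms(2) by simp
  then show ?thesis using shift by metis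
qed

lemma upt_0_8: "[0..<8] = [0, 1, 2, 3, 4, 5, 6, 7]"
  by (simp add: upt_rec)

lemma fubini_step_8:
  "fubini_step 8 M [a0, a1, a2, a3, a4, a5, a6, a7] =
    [0, (a1 + a0) mod M, 2 * (a2 + a1) mod M, 3 * (a3 + a2) mod M, 4 * (a4 + a3) mod M,
     5 * (a5 + a4) mod M, 6 * (a6 + a5) mod M, 7 * (a7 + a6) mod M]"
  by (simp add: fubini_step_def upt_0_8)

lemma iterates_numeral: "iterates f x (numeral k) = x # iterates f (f x) (pred_numeral k)"
  by (simp add: numeral_eq_Suc)

text \<open>The orbits are computed by the simplifier; the \<open>let\<close> makes it evaluate each orbit once.\<close>

lemma fubini_state_8_64_table:
  assumes "2 \<le> r" and "r \<le> 8"
  shows "fubini_state 8 64 r 13 = fubini_state 8 64 r 5"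
    and "3 \<le> m \<Longrightarrow> m \<le> 6 \<Longrightarrow> m - 1 \<le> n \<Longrightarrow> n < 13 \<Longrightarrow>
      sum_list (fubini_state 8 64 r (n + 2)) mod 2 ^ m = sum_list (fubini_state 8 64 r n) mod 2 ^ m"
proof -
  define ss where "ss = iterates (fubini_step 8 64) (fubini_init 8 64 r) 15"
  consider "r = 2" | "r = 3" | "r = 4" | "r = 5" | "r = 6" | "r = 7" | "r = 8"
    using assms by linarith
  then have "let ss = iterates (fubini_step 8 64) (fubini_init 8 64 r) 15 in ss ! 13 = ss ! 5 \<and>
      (\<forall>m\<in>{3..6}. \<forall>n\<in>{2..<13}. m - 1 \<le> n \<longrightarrow>
        sum_list (ss ! (n + 2)) mod 2 ^ m = sum_list (ss ! n) mod 2 ^ m)"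
    unfolding atLeastLessThan_upt atLeastAtMost_upt
    by cases (hypsubst_thin, simp add: fubini_init_def fubini_step_8 upt_0_8 upt_rec fact_numeral
        iterates_numeral Let_def)+
  then have table: "ss ! 13 = ss ! 5" "\<forall>m\<in>{3..6}. \<forall>n\<in>{2..<13}. m - 1 \<le> n \<longrightarrow>
      sum_list (ss ! (n + 2)) mod 2 ^ m = sum_list (ss ! n) mod 2 ^ m"
    unfolding Let_def ss_def[symmetric] by simp_all
  have ss: "ss ! k = fubini_state 8 64 r k" if "k \<le> 15" for k
    using that by (simp add: ss_def nth_iterates fubini_state_def)
  show "fubini_state 8 64 r 13 = fubini_state 8 64 r 5"
    using table(1) ss[of 13] ss[of 5] by simp
  show "sum_list (fubini_state 8 64 r (n + 2)) mod 2 ^ m = sum_list (fubini_state 8 64 r n) mod 2 ^ m"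
    if "3 \<le> m" "m \<le> 6" "m - 1 \<le> n" "n < 13"
  proof -
    have "m \<in> {3..6}" "n \<in> {2..<13}" using that by auto
    with table(2) have "sum_list (ss ! (n + 2)) mod 2 ^ m = sum_list (ss ! n) mod 2 ^ m"
      using that(3) by blast
    then show ?thesis using ss[of n] ss[of "n + 2"] that(4) by simp
  qed
qed

lemma fubini_state_8_64_periodic:
  assumes "2 \<le> r" and "r \<le> 8" and "5 \<le> n"
  shows "fubini_state 8 64 r n = fubini_state 8 64 r (5 + (n - 5) mod 8)"
proof -
  have "(fubini_step 8 64 ^^ (5 + 8)) (fubini_init 8 64 r)
      = (fubini_step 8 64 ^^ 5) (fubini_init 8 64 r)"
    using fubini_state_8_64_table(1)[OF assms(1,2)] by (simp add: fubini_state_def)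
  from funpow_eventually_periodic[OF this assms(3)] show ?thesis
    unfolding fubini_state_def .
qed

lemma fubini_state_8_64_representative:
  assumes "2 \<le> r" and "r \<le> 8" and "k \<le> 5" and "k \<le> n"
  obtains n' where "k \<le> n'" and "n' < 13"
    and "fubini_state 8 64 r n' = fubini_state 8 64 r n"
    and "fubini_state 8 64 r (n' + 2) = fubini_state 8 64 r (n + 2)"
proof (cases "n < 13")
  case True
  then show ?thesis using assms(4) that by blast
next
  case False
  define n' where "n' = 5 + (n - 5) mod 8"
  note periodic = fubini_state_8_64_periodic[OF assms(1,2)]
  have "(n' + 2 - 5) mod 8 = ((n - 5) mod 8 + 2) mod 8"
    by (simp add: n'_def)
  also have "\<dots> = (n - 5 + 2) mod 8"
    by (rule mod_add_left_eq)
  also have "\<dots> = (n + 2 - 5) mod 8"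
    by (rule arg_cong[where f="\<lambda>x. x mod 8"]) (use False in linarith)
  finally have "(n' + 2 - 5) mod 8 = (n + 2 - 5) mod 8" .
  then have "fubini_state 8 64 r (n' + 2) = fubini_state 8 64 r (n + 2)"
    using periodic[of "n' + 2"] periodic[of "n + 2"] False by (simp add: n'_def)
  moreover have "fubini_state 8 64 r n' = fubini_state 8 64 r n"
    using periodic[of n] False by (simp add: n'_def)
  moreover have "k \<le> n'" "n' < 13"
    using assms(3) by (simp_all add: n'_def)
  ultimately show ?thesis using that by blast
qed

lemma r_fubini_mod_pow2_eq_sum_fubini_state:
  assumes "r \<ge> 1" and "m \<le> 6"
  shows "r_fubini n r mod 2 ^ m = sum_list (fubini_state 8 64 (min r 8) n) mod 2 ^ m"
proof -
  have dvd: "2 ^ m dvd (64::nat)" using le_imp_power_dvd[OF assms(2), of "2::nat"] by simp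
  have "r_fubini n r mod 64 = sum_list (fubini_state 8 64 r n) mod 64"
    using assms(1) by (intro r_fubini_mod_eq_sum_fubini_state) (simp_all add: fact_numeral)
  then have "r_fubini n r mod 2 ^ m = sum_list (fubini_state 8 64 r n) mod 2 ^ m"
    using mod_mod_cancel[OF dvd] by metis
  moreover have "fubini_state 8 64 r n = fubini_state 8 64 (min r 8) n"
    using fubini_state_beyond_width[of 8 r 64 n] by (simp add: min_def)
  ultimately show ?thesis by simp
qed

theorem theorem4p6:
  fixes r m n :: nat
  assumes "r \<ge> 2" and "3 \<le> m" and "m \<le> 6" and "n \<ge> m - 1"
  shows "r_fubini (n + 2) r mod 2 ^ m = r_fubini n r mod 2 ^ m"
proof -
  have r: "2 \<le> min r 8" "min r 8 \<le> 8" using assms(1) by simp_all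
  have "m - 1 \<le> 5" using assms(3) by simp
  then obtain n' where n': "m - 1 \<le> n'" "n' < 13"
    and "fubini_state 8 64 (min r 8) n' = fubini_state 8 64 (min r 8) n"
    and "fubini_state 8 64 (min r 8) (n' + 2) = fubini_state 8 64 (min r 8) (n + 2)"
    by (rule fubini_state_8_64_representative[OF r _ assms(4)])
  moreover note fubini_state_8_64_table(2)[OF r assms(2,3) n']
  moreover have "1 \<le> r" using assms(1) by simp
  ultimately show ?thesis by (simp add: r_fubini_mod_pow2_eq_sum_fubini_state assms(3))
qed

end
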